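(* Let $T=(\{T_g\}_{g\in G},\{\gamma_{g,h}\}_{g,h\in G},u)$ be an action of a group $G$ on a semigroupal category $\mathcal{C}$, let $\mathcal{I}$ be an ideal of $\mathcal{C}$, and for each $g\in G$ put $\mathcal{C}_g=\mathcal{I}\cap\overline{T_g(\mathcal{I})}$. Then (1) $\mathcal{C}_e=\mathcal{I}$; (2) $T_g(\mathcal{C}_{g^{-1}}\cap\mathcal{C}_h)\subseteq\mathcal{C}_g\cap\mathcal{C}_{gh}$ for all $g,h\in G$; (3) $\overline{T_g(\mathcal{C}_{g^{-1}}\cap\mathcal{C}_h)}=\mathcal{C}_g\cap\mathcal{C}_{gh}$ for all $g,h\in G$.
   Context: A semigroupal category is a (strict) category with a tensor product functor and associator satisfying the pentagon axiom. An action of a group $G$ (unit $e$) on $\mathcal{C}$ consists of semigroupal auto-equivalences $T_g$ of $\mathcal{C}$, natural isomorphisms of semigroupal functors $\gamma_{g,h}\colon T_gT_h\Rightarrow T_{gh}$ and $u\colon\mathrm{Id}_{\mathcal{C}}\Rightarrow T_e$, with $(\gamma_{gh,k})_X\circ(\gamma_{g,h})_{T_k(X)}=(\gamma_{g,hk})_X\circ T_g((\gamma_{h,k})_X)$, and with $u_{T_g(X)}$, $(\gamma_{e,g})_X$ mutually inverse and $T_g(u_X)$, $(\gamma_{g,e})_X$ mutually inverse. For a subcategory $\mathcal{D}$, $\overline{\mathcal{D}}$ denotes the smallest subcategory of $\mathcal{C}$ containing $\mathcal{D}$ and closed under isomorphisms (with each of its objects $X$ and each isomorphism $\varphi\colon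 X\to X'$ in $\mathcal{C}$, it contains $X'$ and $\varphi$). An ideal of $\mathcal{C}$ is a subcategory closed under isomorphisms such that $X\otimes Y$ and $Y\otimes X$ are objects of it whenever $X$ is an object of it and $Y$ is any object of $\mathcal{C}$. Intersections of subcategories are taken on objects and morphisms; $T_g(\mathcal{D})$ is the image subcategory. *)

theory Defs
  imports "HOL-Algebra.Group"
begin

text \<open>A (strict) category with a tensor product functor and associator.
  Composition convention: c_comp C g f is g after f (defined when
  c_cod C f = c_dom C g).\<close>

record ('o, 'm) scat =
  c_obj  :: "'o set"
  c_mor  :: "'m set"
  c_dom  :: "'m \<Rightarrow> 'o"
  c_cod  :: "'m \<Rightarrow> 'o"
  c_id   :: "'o \<Rightarrow> 'm"
  c_comp :: "'m \<Rightarrow> 'm \<Rightarrow> 'm"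
  c_tob  :: "'o \<Rightarrow> 'o \<Rightarrow> 'o"
  c_tmor :: "'m \<Rightarrow> 'm \<Rightarrow> 'm"
  c_assoc :: "'o \<Rightarrow> 'o \<Rightarrow> 'o \<Rightarrow> 'm"

definition is_category :: "('o, 'm, 'z) scat_scheme \<Rightarrow> bool" where
  "is_category C \<longleftrightarrow>
     (\<forall>f \<in> c_mor C. c_dom C f \<in> c_obj C \<and> c_cod C f \<in> c_obj C) \<and>
     (\<forall>X \<in> c_obj C. c_id C X \<in> c_mor C \<and> c_dom C (c_id C X) = X \<and> c_cod C (c_id C X) = X) \<and>
     (\<forall>f \<in> c_mor C. \<forall>g \<in> c_mor C. c_cod C f = c_dom C g \<longrightarrow>
        c_comp C g f \<in> c_mor C \<and> c_dom C (c_comp C g f) = c_dom C f \<and>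
        c_cod C (c_comp C g f) = c_cod C g) \<and>
     (\<forall>f \<in> c_mor C. c_comp C f (c_id C (c_dom C f)) = f \<and> c_comp C (c_id C (c_cod C f)) f = f) \<and>
     (\<forall>f \<in> c_mor C. \<forall>g \<in> c_mor C. \<forall>h \<in> c_mor C.
        c_cod C f = c_dom C g \<longrightarrow> c_cod C g = c_dom C h \<longrightarrow>
        c_comp C h (c_comp C g f) = c_comp C (c_comp C h g) f)"

definition mutually_inverse :: "('o, 'm, 'z) scat_scheme \<Rightarrow> 'm \<Rightarrow> 'm \<Rightarrow> bool" where
  "mutually_inverse C phi psi \<longleftrightarrow>
     phi \<in> c_mor C \<and> psi \<in> c_mor C \<and>
     c_dom C psi = c_cod C phi \<and> c_cod C psi = c_dom C phi \<and>
     c_comp C psi phi = c_id C (c_dom C phi) \<and> c_comp C phi psi = c_id C (c_cod C phi)"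

definition is_iso :: "('o, 'm, 'z) scat_scheme \<Rightarrow> 'm \<Rightarrow> bool" where
  "is_iso C phi \<longleftrightarrow> (\<exists>psi. mutually_inverse C phi psi)"

definition tensor_functor :: "('o, 'm, 'z) scat_scheme \<Rightarrow> bool" where
  "tensor_functor C \<longleftrightarrow>
     (\<forall>X \<in> c_obj C. \<forall>Y \<in> c_obj C. c_tob C X Y \<in> c_obj C \<and>
        c_tmor C (c_id C X) (c_id C Y) = c_id C (c_tob C X Y)) \<and>
     (\<forall>f \<in> c_mor C. \<forall>g \<in> c_mor C. c_tmor C f g \<in> c_mor C \<and>
        c_dom C (c_tmor C f g) = c_tob C (c_dom C f) (c_dom C g) \<and>
        c_cod C (c_tmor C f g) = c_tob C (c_cod C f) (c_cod C g)) \<and>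
     (\<forall>f \<in> c_mor C. \<forall>f' \<in> c_mor C. \<forall>g \<in> c_mor C. \<forall>g' \<in> c_mor C.
        c_cod C f = c_dom C f' \<longrightarrow> c_cod C g = c_dom C g' \<longrightarrow>
        c_tmor C (c_comp C f' f) (c_comp C g' g) = c_comp C (c_tmor C f' g') (c_tmor C f g))"

definition associator_ok :: "('o, 'm, 'z) scat_scheme \<Rightarrow> bool" where
  "associator_ok C \<longleftrightarrow>
     (\<forall>X \<in> c_obj C. \<forall>Y \<in> c_obj C. \<forall>Z \<in> c_obj C.
        c_assoc C X Y Z \<in> c_mor C \<and> is_iso C (c_assoc C X Y Z) \<and>
        c_dom C (c_assoc C X Y Z) = c_tob C (c_tob C X Y) Z \<and>
        c_cod C (c_assoc C X Y Z) = c_tob C X (c_tob C Y Z)) \<and>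
     (\<forall>f \<in> c_mor C. \<forall>g \<in> c_mor C. \<forall>h \<in> c_mor C.
        c_comp C (c_assoc C (c_cod C f) (c_cod C g) (c_cod C h)) (c_tmor C (c_tmor C f g) h) =
        c_comp C (c_tmor C f (c_tmor C g h)) (c_assoc C (c_dom C f) (c_dom C g) (c_dom C h))) \<and>
     (\<forall>W \<in> c_obj C. \<forall>X \<in> c_obj C. \<forall>Y \<in> c_obj C. \<forall>Z \<in> c_obj C.
        c_comp C (c_assoc C W X (c_tob C Y Z)) (c_assoc C (c_tob C W X) Y Z) =
        c_comp C (c_tmor C (c_id C W) (c_assoc C X Y Z))
          (c_comp C (c_assoc C W (c_tob C X Y) Z) (c_tmor C (c_assoc C W X Y) (c_id C Z))))"

definition semigroupal_category :: "('o, 'm, 'z) scat_scheme \<Rightarrow> bool" where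
  "semigroupal_category C \<longleftrightarrow> is_category C \<and> tensor_functor C \<and> associator_ok C"

text \<open>A semigroupal endofunctor is given by its object map Fo, morphism map Fm and
  structure isomorphisms J_{X,Y} : F X (x) F Y -> F (X (x) Y).\<close>

definition is_endofunctor :: "('o, 'm, 'z) scat_scheme \<Rightarrow> ('o \<Rightarrow> 'o) \<Rightarrow> ('m \<Rightarrow> 'm) \<Rightarrow> bool" where
  "is_endofunctor C Fo Fm \<longleftrightarrow>
     (\<forall>X \<in> c_obj C. Fo X \<in> c_obj C \<and> Fm (c_id C X) = c_id C (Fo X)) \<and>
     (\<forall>f \<in> c_mor C. Fm f \<in> c_mor C \<and> c_dom C (Fm f) = Fo (c_dom C f) \<and>
        c_cod C (Fm f) = Fo (c_cod C f)) \<and>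
     (\<forall>f \<in> c_mor C. \<forall>g \<in> c_mor C. c_cod C f = c_dom C g \<longrightarrow>
        Fm (c_comp C g f) = c_comp C (Fm g) (Fm f))"

definition semigroupal_functor ::
  "('o, 'm, 'z) scat_scheme \<Rightarrow> ('o \<Rightarrow> 'o) \<Rightarrow> ('m \<Rightarrow> 'm) \<Rightarrow> ('o \<Rightarrow> 'o \<Rightarrow> 'm) \<Rightarrow> bool" where
  "semigroupal_functor C Fo Fm J \<longleftrightarrow>
     is_endofunctor C Fo Fm \<and>
     (\<forall>X \<in> c_obj C. \<forall>Y \<in> c_obj C. is_iso C (J X Y) \<and>
        c_dom C (J X Y) = c_tob C (Fo X) (Fo Y) \<and> c_cod C (J X Y) = Fo (c_tob C X Y)) \<and>
     (\<forall>f \<in> c_mor C. \<forall>g \<in> c_mor C.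
        c_comp C (J (c_cod C f) (c_cod C g)) (c_tmor C (Fm f) (Fm g)) =
        c_comp C (Fm (c_tmor C f g)) (J (c_dom C f) (c_dom C g))) \<and>
     (\<forall>X \<in> c_obj C. \<forall>Y \<in> c_obj C. \<forall>Z \<in> c_obj C.
        c_comp C (Fm (c_assoc C X Y Z))
          (c_comp C (J (c_tob C X Y) Z) (c_tmor C (J X Y) (c_id C (Fo Z)))) =
        c_comp C (J X (c_tob C Y Z))
          (c_comp C (c_tmor C (c_id C (Fo X)) (J Y Z)) (c_assoc C (Fo X) (Fo Y) (Fo Z))))"

definition is_equivalence :: "('o, 'm, 'z) scat_scheme \<Rightarrow> ('o \<Rightarrow> 'o) \<Rightarrow> ('m \<Rightarrow> 'm) \<Rightarrow> bool" where
  "is_equivalence C Fo Fm \<longleftrightarrow>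
     is_endofunctor C Fo Fm \<and>
     (\<forall>X \<in> c_obj C. \<forall>Y \<in> c_obj C.
        bij_betw Fm {f \<in> c_mor C. c_dom C f = X \<and> c_cod C f = Y}
                    {f \<in> c_mor C. c_dom C f = Fo X \<and> c_cod C f = Fo Y}) \<and>
     (\<forall>Y \<in> c_obj C. \<exists>X \<in> c_obj C. \<exists>phi. is_iso C phi \<and> c_dom C phi = Fo X \<and> c_cod C phi = Y)"

definition semigroupal_autoequivalence ::
  "('o, 'm, 'z) scat_scheme \<Rightarrow> ('o \<Rightarrow> 'o) \<Rightarrow> ('m \<Rightarrow> 'm) \<Rightarrow> ('o \<Rightarrow> 'o \<Rightarrow> 'm) \<Rightarrow> bool" where
  "semigroupal_autoequivalence C Fo Fm J \<longleftrightarrow>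
     semigroupal_functor C Fo Fm J \<and> is_equivalence C Fo Fm"

definition semigroupal_nat_iso ::
  "('o, 'm, 'z) scat_scheme \<Rightarrow> ('o \<Rightarrow> 'o) \<Rightarrow> ('m \<Rightarrow> 'm) \<Rightarrow> ('o \<Rightarrow> 'o \<Rightarrow> 'm)
     \<Rightarrow> ('o \<Rightarrow> 'o) \<Rightarrow> ('m \<Rightarrow> 'm) \<Rightarrow> ('o \<Rightarrow> 'o \<Rightarrow> 'm) \<Rightarrow> ('o \<Rightarrow> 'm) \<Rightarrow> bool" where
  "semigroupal_nat_iso C Fo Fm JF Go Gm JG theta \<longleftrightarrow>
     (\<forall>X \<in> c_obj C. is_iso C (theta X) \<and> c_dom C (theta X) = Fo X \<and> c_cod C (theta X) = Go X) \<and>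
     (\<forall>f \<in> c_mor C. c_comp C (theta (c_cod C f)) (Fm f) = c_comp C (Gm f) (theta (c_dom C f))) \<and>
     (\<forall>X \<in> c_obj C. \<forall>Y \<in> c_obj C.
        c_comp C (theta (c_tob C X Y)) (JF X Y) = c_comp C (JG X Y) (c_tmor C (theta X) (theta Y)))"

definition comp_J :: "('o, 'm, 'z) scat_scheme \<Rightarrow> ('o \<Rightarrow> 'o) \<Rightarrow> ('o \<Rightarrow> 'o \<Rightarrow> 'm)
     \<Rightarrow> ('m \<Rightarrow> 'm) \<Rightarrow> ('o \<Rightarrow> 'o \<Rightarrow> 'm) \<Rightarrow> 'o \<Rightarrow> 'o \<Rightarrow> 'm" where
  "comp_J C Fo JF Gm JG X Y = c_comp C (Gm (JF X Y)) (JG (Fo X) (Fo Y))"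

definition id_J :: "('o, 'm, 'z) scat_scheme \<Rightarrow> 'o \<Rightarrow> 'o \<Rightarrow> 'm" where
  "id_J C X Y = c_id C (c_tob C X Y)"

definition group_action ::
  "('g, 'b) monoid_scheme \<Rightarrow> ('o, 'm, 'z) scat_scheme \<Rightarrow>
   ('g \<Rightarrow> 'o \<Rightarrow> 'o) \<Rightarrow> ('g \<Rightarrow> 'm \<Rightarrow> 'm) \<Rightarrow> ('g \<Rightarrow> 'o \<Rightarrow> 'o \<Rightarrow> 'm) \<Rightarrow>
   ('g \<Rightarrow> 'g \<Rightarrow> 'o \<Rightarrow> 'm) \<Rightarrow> ('o \<Rightarrow> 'm) \<Rightarrow> bool" where
  "group_action G C To Tm TJ gam u \<longleftrightarrow>
     (\<forall>g \<in> carrier G. semigroupal_autoequivalence C (To g) (Tm g) (TJ g)) \<and>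
     (\<forall>g \<in> carrier G. \<forall>h \<in> carrier G.
        semigroupal_nat_iso C (To g \<circ> To h) (Tm g \<circ> Tm h) (comp_J C (To h) (TJ h) (Tm g) (TJ g))
          (To (g \<otimes>\<^bsub>G\<^esub> h)) (Tm (g \<otimes>\<^bsub>G\<^esub> h)) (TJ (g \<otimes>\<^bsub>G\<^esub> h)) (gam g h)) \<and>
     semigroupal_nat_iso C id id (id_J C)
        (To \<one>\<^bsub>G\<^esub>) (Tm \<one>\<^bsub>G\<^esub>) (TJ \<one>\<^bsub>G\<^esub>) u \<and>
     (\<forall>g \<in> carrier G. \<forall>h \<in> carrier G. \<forall>k \<in> carrier G. \<forall>X \<in> c_obj C.
        c_comp C (gam (g \<otimes>\<^bsub>G\<^esub> h) k X) (gam g h (To k X)) =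
        c_comp C (gam g (h \<otimes>\<^bsub>G\<^esub> k) X) (Tm g (gam h k X))) \<and>
     (\<forall>g \<in> carrier G. \<forall>X \<in> c_obj C.
        mutually_inverse C (u (To g X)) (gam \<one>\<^bsub>G\<^esub> g X) \<and>
        mutually_inverse C (Tm g (u X)) (gam g \<one>\<^bsub>G\<^esub> X))"

type_synonym ('o, 'm) subcat = "'o set \<times> 'm set"

definition is_subcategory :: "('o, 'm, 'z) scat_scheme \<Rightarrow> ('o, 'm) subcat \<Rightarrow> bool" where
  "is_subcategory C D \<longleftrightarrow>
     fst D \<subseteq> c_obj C \<and> snd D \<subseteq> c_mor C \<and>
     (\<forall>f \<in> snd D. c_dom C f \<in> fst D \<and> c_cod C f \<in> fst D) \<and>
     (\<forall>X \<in> fst D. c_id C X \<in> snd D) \<and>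
     (\<forall>f \<in> snd D. \<forall>g \<in> snd D. c_cod C f = c_dom C g \<longrightarrow> c_comp C g f \<in> snd D)"

definition iso_closed :: "('o, 'm, 'z) scat_scheme \<Rightarrow> ('o, 'm) subcat \<Rightarrow> bool" where
  "iso_closed C D \<longleftrightarrow>
     (\<forall>X \<in> fst D. \<forall>phi. is_iso C phi \<and> c_dom C phi = X \<longrightarrow>
        c_cod C phi \<in> fst D \<and> phi \<in> snd D)"

definition sub_le :: "('o, 'm) subcat \<Rightarrow> ('o, 'm) subcat \<Rightarrow> bool" where
  "sub_le D E \<longleftrightarrow> fst D \<subseteq> fst E \<and> snd D \<subseteq> snd E"

definition sub_inter :: "('o, 'm) subcat \<Rightarrow> ('o, 'm) subcat \<Rightarrow> ('o, 'm) subcat" where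
  "sub_inter D E = (fst D \<inter> fst E, snd D \<inter> snd E)"

definition iso_closure :: "('o, 'm, 'z) scat_scheme \<Rightarrow> ('o, 'm) subcat \<Rightarrow> ('o, 'm) subcat" where
  "iso_closure C D =
     (\<Inter>{fst S | S. is_subcategory C S \<and> iso_closed C S \<and> sub_le D S},
      \<Inter>{snd S | S. is_subcategory C S \<and> iso_closed C S \<and> sub_le D S})"

definition sub_image :: "('o \<Rightarrow> 'o) \<Rightarrow> ('m \<Rightarrow> 'm) \<Rightarrow> ('o, 'm) subcat \<Rightarrow> ('o, 'm) subcat" where
  "sub_image Fo Fm D = (Fo ` fst D, Fm ` snd D)"

definition is_ideal :: "('o, 'm, 'z) scat_scheme \<Rightarrow> ('o, 'm) subcat \<Rightarrow> bool" where
  "is_ideal C I \<longleftrightarrow> is_subcategory C I \<and> iso_closed C I \<and>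
     (\<forall>X \<in> fst I. \<forall>Y \<in> c_obj C. c_tob C X Y \<in> fst I \<and> c_tob C Y X \<in> fst I)"

definition Csub :: "('o, 'm, 'z) scat_scheme \<Rightarrow> ('g \<Rightarrow> 'o \<Rightarrow> 'o) \<Rightarrow> ('g \<Rightarrow> 'm \<Rightarrow> 'm)
    \<Rightarrow> ('o, 'm) subcat \<Rightarrow> 'g \<Rightarrow> ('o, 'm) subcat" where
  "Csub C To Tm I g = sub_inter I (iso_closure C (sub_image (To g) (Tm g) I))"

end

theory Submission
  imports Defs
begin

text \<open>Membership in a replete subcategory is invariant under composing with isomorphisms, hence
  under conjugating a morphism by the two sides of a commutative square of isomorphisms. So for a
  replete K the preimage P_g(K) of K under T_g is again replete, and the natural isomorphisms gamma
  and u give P_h(P_g(K)) = P_gh(K) and P_e(K) = K. Since T_g(D) is contained in K iff D is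
  contained in P_g(K), the functor T_g maps the closure of D into K as soon as it maps D into K;
  this yields (1) and (2). For (3), (2) applied to g^-1 and gh shows that T_g^-1 maps
  C_g \<inter> C_gh into C_g^-1 \<inter> C_h, so C_g \<inter> C_gh lies in P_g^-1(P_g(L)) = L for
  the closure L on the left.\<close>

lemma cat_dom_obj: "is_category C \<Longrightarrow> f \<in> c_mor C \<Longrightarrow> c_dom C f \<in> c_obj C"
  unfolding is_category_def by blast

lemma cat_cod_obj: "is_category C \<Longrightarrow> f \<in> c_mor C \<Longrightarrow> c_cod C f \<in> c_obj C"
  unfolding is_category_def by blast

lemma cat_id_mor: "is_category C \<Longrightarrow> X \<in> c_obj C \<Longrightarrow> c_id C X \<in> c_mor C"
  unfolding is_category_def by blast

lemma cat_comp_mor: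
  "is_category C \<Longrightarrow> f \<in> c_mor C \<Longrightarrow> g \<in> c_mor C \<Longrightarrow> c_cod C f = c_dom C g \<Longrightarrow>
   c_comp C g f \<in> c_mor C \<and> c_dom C (c_comp C g f) = c_dom C f \<and> c_cod C (c_comp C g f) = c_cod C g"
  unfolding is_category_def by blast

lemma cat_id_right: "is_category C \<Longrightarrow> f \<in> c_mor C \<Longrightarrow> c_comp C f (c_id C (c_dom C f)) = f"
  unfolding is_category_def by blast

lemma cat_id_left: "is_category C \<Longrightarrow> f \<in> c_mor C \<Longrightarrow> c_comp C (c_id C (c_cod C f)) f = f"
  unfolding is_category_def by blast

lemma cat_comp_assoc:
  "is_category C \<Longrightarrow> f \<in> c_mor C \<Longrightarrow> g \<in> c_mor C \<Longrightarrow> h \<in> c_mor C \<Longrightarrow>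
   c_cod C f = c_dom C g \<Longrightarrow> c_cod C g = c_dom C h \<Longrightarrow>
   c_comp C h (c_comp C g f) = c_comp C (c_comp C h g) f"
  unfolding is_category_def by blast

lemma is_iso_mor: "is_iso C phi \<Longrightarrow> phi \<in> c_mor C"
  unfolding is_iso_def mutually_inverse_def by blast

lemma mutually_inverse_sym: "mutually_inverse C phi psi \<Longrightarrow> mutually_inverse C psi phi"
  unfolding mutually_inverse_def by auto

lemma mutually_inverse_is_iso: "mutually_inverse C phi psi \<Longrightarrow> is_iso C psi"
  unfolding is_iso_def by (blast dest: mutually_inverse_sym)

definition replete_subcategory :: "('o, 'm, 'z) scat_scheme \<Rightarrow> ('o, 'm) subcat \<Rightarrow> bool" where
  "replete_subcategory C K \<longleftrightarrow> is_subcategory C K \<and> iso_closed C K"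

lemma replete_subcategoryD:
  assumes "replete_subcategory C K"
  shows "fst K \<subseteq> c_obj C" "snd K \<subseteq> c_mor C"
    "f \<in> snd K \<Longrightarrow> c_dom C f \<in> fst K" "f \<in> snd K \<Longrightarrow> c_cod C f \<in> fst K"
    "f \<in> snd K \<Longrightarrow> g \<in> snd K \<Longrightarrow> c_cod C f = c_dom C g \<Longrightarrow> c_comp C g f \<in> snd K"
    "X \<in> fst K \<Longrightarrow> is_iso C phi \<Longrightarrow> c_dom C phi = X \<Longrightarrow> c_cod C phi \<in> fst K \<and> phi \<in> snd K"
    "X \<in> fst K \<Longrightarrow> c_id C X \<in> snd K"
  using assms unfolding replete_subcategory_def is_subcategory_def iso_closed_def by blast+

lemma replete_subcategory_le:
  assumes "replete_subcategory C K"
  shows "sub_le K (c_obj C, c_mor C)"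
  using replete_subcategoryD(1,2)[OF assms] unfolding sub_le_def by simp

lemma replete_iso_cod_iff:
  assumes "replete_subcategory C K" "is_iso C phi"
  shows "c_cod C phi \<in> fst K \<longleftrightarrow> c_dom C phi \<in> fst K"
proof -
  obtain psi where "mutually_inverse C phi psi" using assms(2) unfolding is_iso_def by blast
  moreover from this have "c_dom C psi = c_cod C phi" "c_cod C psi = c_dom C phi"
    unfolding mutually_inverse_def by auto
  ultimately show ?thesis
    using replete_subcategoryD(6)[OF assms(1)] assms(2) mutually_inverse_is_iso by metis
qed

lemma replete_comp_iso_left:
  assumes C: "is_category C" and K: "replete_subcategory C K"
    and psi: "is_iso C psi" and f: "f \<in> c_mor C" and match: "c_dom C psi = c_cod C f"
  shows "c_comp C psi f \<in> snd K \<longleftrightarrow> f \<in> snd K"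
proof
  obtain psi' where inv: "mutually_inverse C psi psi'" using psi unfolding is_iso_def by blast
  assume psi_f: "c_comp C psi f \<in> snd K"
  have "c_cod C psi \<in> fst K"
    using replete_subcategoryD(4)[OF K psi_f] cat_comp_mor[OF C f is_iso_mor[OF psi]] match by simp
  then have "psi' \<in> snd K"
    using replete_subcategoryD(6)[OF K] mutually_inverse_is_iso[OF inv] inv
    unfolding mutually_inverse_def by blast
  then have "c_comp C psi' (c_comp C psi f) \<in> snd K"
    using replete_subcategoryD(5)[OF K psi_f] cat_comp_mor[OF C f is_iso_mor[OF psi]] inv match
    unfolding mutually_inverse_def by simp
  also have "c_comp C psi' (c_comp C psi f) = f"
    using cat_comp_assoc[OF C f is_iso_mor[OF psi]] cat_id_left[OF C f] inv match
    unfolding mutually_inverse_def by simp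
  finally show "f \<in> snd K" .
next
  assume "f \<in> snd K"
  moreover have "psi \<in> snd K"
    using replete_subcategoryD(4,6)[OF K] \<open>f \<in> snd K\<close> psi match by metis
  ultimately show "c_comp C psi f \<in> snd K" using replete_subcategoryD(5)[OF K] match by simp
qed

lemma replete_comp_iso_right:
  assumes C: "is_category C" and K: "replete_subcategory C K"
    and phi: "is_iso C phi" and f: "f \<in> c_mor C" and match: "c_cod C phi = c_dom C f"
  shows "c_comp C f phi \<in> snd K \<longleftrightarrow> f \<in> snd K"
proof
  obtain phi' where inv: "mutually_inverse C phi phi'" using phi unfolding is_iso_def by blast
  assume f_phi: "c_comp C f phi \<in> snd K"
  have "c_dom C phi \<in> fst K"
    using replete_subcategoryD(3)[OF K f_phi] cat_comp_mor[OF C is_iso_mor[OF phi] f] match by simp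
  then have "phi' \<in> snd K"
    using replete_iso_cod_iff[OF K mutually_inverse_is_iso[OF inv]] replete_subcategoryD(6)[OF K]
      mutually_inverse_is_iso[OF inv] inv unfolding mutually_inverse_def by metis
  then have "c_comp C (c_comp C f phi) phi' \<in> snd K"
    using replete_subcategoryD(5)[OF K _ f_phi] cat_comp_mor[OF C is_iso_mor[OF phi] f] inv match
    unfolding mutually_inverse_def by simp
  also have "c_comp C (c_comp C f phi) phi' = c_comp C f (c_comp C phi phi')"
    using cat_comp_assoc[OF C _ is_iso_mor[OF phi] f, of phi'] inv match
    unfolding mutually_inverse_def by simp
  also have "\<dots> = f"
    using cat_id_right[OF C f] inv match unfolding mutually_inverse_def by simp
  finally show "f \<in> snd K" .
next
  assume "f \<in> snd K"
  moreover have "phi \<in> snd K"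
    using replete_subcategoryD(3,6)[OF K] replete_iso_cod_iff[OF K phi] \<open>f \<in> snd K\<close> phi match
    by metis
  ultimately show "c_comp C f phi \<in> snd K" using replete_subcategoryD(5)[OF K] match by simp
qed

lemma replete_square_iff:
  assumes C: "is_category C" and K: "replete_subcategory C K"
    and isos: "is_iso C phi" "is_iso C psi" and a: "a \<in> c_mor C" and b: "b \<in> c_mor C"
    and "c_dom C phi = c_dom C a" "c_cod C phi = c_dom C b"
    and "c_dom C psi = c_cod C a" "c_cod C psi = c_cod C b"
    and square: "c_comp C psi a = c_comp C b phi"
  shows "a \<in> snd K \<longleftrightarrow> b \<in> snd K"
proof -
  have "a \<in> snd K \<longleftrightarrow> c_comp C psi a \<in> snd K"
    using replete_comp_iso_left[OF C K isos(2) a] assms by simp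
  also have "\<dots> \<longleftrightarrow> b \<in> snd K"
    unfolding square using replete_comp_iso_right[OF C K isos(1) b] assms by simp
  finally show ?thesis .
qed

lemma sub_le_antisym: "sub_le D E \<Longrightarrow> sub_le E D \<Longrightarrow> D = E"
  unfolding sub_le_def by (auto simp: prod_eq_iff)

lemma replete_sub_inter:
  "replete_subcategory C K \<Longrightarrow> replete_subcategory C L \<Longrightarrow> replete_subcategory C (sub_inter K L)"
  unfolding replete_subcategory_def is_subcategory_def iso_closed_def sub_inter_def by auto

lemma iso_closure_mem:
  "X \<in> fst (iso_closure C D) \<longleftrightarrow> (\<forall>S. replete_subcategory C S \<and> sub_le D S \<longrightarrow> X \<in> fst S)"
  "f \<in> snd (iso_closure C D) \<longleftrightarrow> (\<forall>S. replete_subcategory C S \<and> sub_le D S \<longrightarrow> f \<in> snd S)"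
  unfolding iso_closure_def replete_subcategory_def by auto

lemma iso_closure_least:
  "replete_subcategory C S \<Longrightarrow> sub_le D S \<Longrightarrow> sub_le (iso_closure C D) S"
  using iso_closure_mem[of _ C D] unfolding sub_le_def[of "iso_closure C D"] by blast

lemma iso_closure_upper: "sub_le D (iso_closure C D)"
  unfolding iso_closure_def sub_le_def by auto

lemma replete_iso_closure:
  assumes C: "is_category C" and D: "sub_le D (c_obj C, c_mor C)"
  shows "replete_subcategory C (iso_closure C D)"
proof -
  have whole: "replete_subcategory C (c_obj C, c_mor C)"
    using C unfolding replete_subcategory_def is_subcategory_def iso_closed_def is_category_def
      is_iso_def mutually_inverse_def by auto
  show ?thesis
    unfolding replete_subcategory_def[of C "iso_closure C D"] is_subcategory_def iso_closed_def
  proof (intro conjI subsetI ballI allI impI)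
    show "X \<in> c_obj C" if "X \<in> fst (iso_closure C D)" for X
      using that whole D unfolding iso_closure_mem by auto
    show "f \<in> c_mor C" if "f \<in> snd (iso_closure C D)" for f
      using that whole D unfolding iso_closure_mem by auto
  qed (unfold iso_closure_mem, (meson replete_subcategoryD)+)
qed

lemma endofunctorD:
  assumes "is_endofunctor C Fo Fm"
  shows "X \<in> c_obj C \<Longrightarrow> Fo X \<in> c_obj C" "X \<in> c_obj C \<Longrightarrow> Fm (c_id C X) = c_id C (Fo X)"
    "f \<in> c_mor C \<Longrightarrow> Fm f \<in> c_mor C"
    "f \<in> c_mor C \<Longrightarrow> c_dom C (Fm f) = Fo (c_dom C f)" "f \<in> c_mor C \<Longrightarrow> c_cod C (Fm f) = Fo (c_cod C f)"
    "f \<in> c_mor C \<Longrightarrow> g \<in> c_mor C \<Longrightarrow> c_cod C f = c_dom C g \<Longrightarrow>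
     Fm (c_comp C g f) = c_comp C (Fm g) (Fm f)"
  using assms unfolding is_endofunctor_def by blast+

lemma id_endofunctor: "is_endofunctor C id id"
  unfolding is_endofunctor_def by simp

lemma endofunctor_comp:
  "is_endofunctor C Fo Fm \<Longrightarrow> is_endofunctor C Go Gm \<Longrightarrow> is_endofunctor C (Go \<circ> Fo) (Gm \<circ> Fm)"
  unfolding is_endofunctor_def by simp

lemma endofunctor_iso:
  assumes C: "is_category C" and F: "is_endofunctor C Fo Fm" and phi: "is_iso C phi"
  shows "is_iso C (Fm phi)"
proof -
  obtain psi where inv: "mutually_inverse C phi psi" using phi unfolding is_iso_def by blast
  then have "phi \<in> c_mor C" "psi \<in> c_mor C" unfolding mutually_inverse_def by auto
  with inv have "mutually_inverse C (Fm phi) (Fm psi)"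
    unfolding mutually_inverse_def
    by (auto simp: endofunctorD[OF F] cat_dom_obj[OF C] cat_cod_obj[OF C]
        simp flip: endofunctorD(6)[OF F])
  then show ?thesis unfolding is_iso_def by blast
qed

definition sub_preimage ::
  "('o, 'm, 'z) scat_scheme \<Rightarrow> ('o \<Rightarrow> 'o) \<Rightarrow> ('m \<Rightarrow> 'm) \<Rightarrow> ('o, 'm) subcat \<Rightarrow> ('o, 'm) subcat" where
  "sub_preimage C Fo Fm K = ({X \<in> c_obj C. Fo X \<in> fst K}, {f \<in> c_mor C. Fm f \<in> snd K})"

lemma sub_image_le_iff:
  "sub_le D (c_obj C, c_mor C) \<Longrightarrow>
   sub_le (sub_image Fo Fm D) K \<longleftrightarrow> sub_le D (sub_preimage C Fo Fm K)"
  unfolding sub_le_def sub_image_def sub_preimage_def by auto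

lemma sub_preimage_comp:
  "is_endofunctor C Fo Fm \<Longrightarrow>
   sub_preimage C Fo Fm (sub_preimage C Go Gm K) = sub_preimage C (Go \<circ> Fo) (Gm \<circ> Fm) K"
  unfolding sub_preimage_def by (auto simp: endofunctorD)

lemma sub_preimage_id:
  assumes "replete_subcategory C K"
  shows "sub_preimage C id id K = K"
  unfolding sub_preimage_def using replete_subcategoryD(1,2)[OF assms] by (auto simp: prod_eq_iff)

lemma replete_sub_preimage:
  assumes C: "is_category C" and F: "is_endofunctor C Fo Fm" and K: "replete_subcategory C K"
  shows "replete_subcategory C (sub_preimage C Fo Fm K)"
  unfolding replete_subcategory_def is_subcategory_def iso_closed_def sub_preimage_def fst_conv snd_conv
proof (intro conjI ballI allI impI subsetI)
  fix f assume f: "f \<in> {f \<in> c_mor C. Fm f \<in> snd K}"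
  then show "c_dom C f \<in> {X \<in> c_obj C. Fo X \<in> fst K}" "c_cod C f \<in> {X \<in> c_obj C. Fo X \<in> fst K}"
    using replete_subcategoryD(3,4)[OF K, of "Fm f"]
    by (auto simp: cat_dom_obj[OF C] cat_cod_obj[OF C] endofunctorD[OF F])
  fix g assume "g \<in> {f \<in> c_mor C. Fm f \<in> snd K}" "c_cod C f = c_dom C g"
  with f show "c_comp C g f \<in> {f \<in> c_mor C. Fm f \<in> snd K}"
    using replete_subcategoryD(5)[OF K] by (auto simp: cat_comp_mor[OF C] endofunctorD[OF F])
next
  fix X assume "X \<in> {X \<in> c_obj C. Fo X \<in> fst K}"
  then show "c_id C X \<in> {f \<in> c_mor C. Fm f \<in> snd K}"
    using replete_subcategoryD(7)[OF K] cat_id_mor[OF C] by (auto simp: endofunctorD[OF F])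
next
  fix X phi assume X: "X \<in> {X \<in> c_obj C. Fo X \<in> fst K}" and phi: "is_iso C phi \<and> c_dom C phi = X"
  then have mor: "phi \<in> c_mor C" by (blast intro: is_iso_mor)
  have "is_iso C (Fm phi)" "c_dom C (Fm phi) = Fo X"
    using endofunctor_iso[OF C F] phi endofunctorD(4)[OF F mor] by auto
  then have "c_cod C (Fm phi) \<in> fst K \<and> Fm phi \<in> snd K"
    using replete_subcategoryD(6)[OF K] X by blast
  then show "c_cod C phi \<in> {X \<in> c_obj C. Fo X \<in> fst K}" "phi \<in> {f \<in> c_mor C. Fm f \<in> snd K}"
    using mor by (auto simp: cat_cod_obj[OF C] endofunctorD[OF F])
qed auto

lemma sub_preimage_mono:
  "sub_le K L \<Longrightarrow> sub_le (sub_preimage C Fo Fm K) (sub_preimage C Fo Fm L)"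
  unfolding sub_le_def sub_preimage_def by auto

lemma sub_image_endofunctor_le:
  "is_endofunctor C Fo Fm \<Longrightarrow> sub_le D (c_obj C, c_mor C) \<Longrightarrow>
   sub_le (sub_image Fo Fm D) (c_obj C, c_mor C)"
  unfolding sub_le_def sub_image_def by (auto simp: endofunctorD)

lemma iso_closure_image_le:
  assumes C: "is_category C" and F: "is_endofunctor C Fo Fm" and K: "replete_subcategory C K"
    and D: "sub_le D (c_obj C, c_mor C)" and image: "sub_le (sub_image Fo Fm D) K"
  shows "sub_le (sub_image Fo Fm (iso_closure C D)) K"
proof -
  have "sub_le (iso_closure C D) (sub_preimage C Fo Fm K)"
    using iso_closure_least replete_sub_preimage[OF C F K] image sub_image_le_iff[OF D] by blast
  moreover have "sub_le (iso_closure C D) (c_obj C, c_mor C)"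
    by (rule replete_subcategory_le[OF replete_iso_closure[OF C D]])
  ultimately show ?thesis using sub_image_le_iff by blast
qed

definition natural_iso :: "('o, 'm, 'z) scat_scheme \<Rightarrow> ('o \<Rightarrow> 'o) \<Rightarrow> ('m \<Rightarrow> 'm)
    \<Rightarrow> ('o \<Rightarrow> 'o) \<Rightarrow> ('m \<Rightarrow> 'm) \<Rightarrow> ('o \<Rightarrow> 'm) \<Rightarrow> bool" where
  "natural_iso C Fo Fm Go Gm theta \<longleftrightarrow>
     (\<forall>X \<in> c_obj C. is_iso C (theta X) \<and> c_dom C (theta X) = Fo X \<and> c_cod C (theta X) = Go X) \<and>
     (\<forall>f \<in> c_mor C. c_comp C (theta (c_cod C f)) (Fm f) = c_comp C (Gm f) (theta (c_dom C f)))"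

lemma semigroupal_nat_iso_natural_iso:
  "semigroupal_nat_iso C Fo Fm JF Go Gm JG theta \<Longrightarrow> natural_iso C Fo Fm Go Gm theta"
  unfolding semigroupal_nat_iso_def natural_iso_def by simp

lemma sub_preimage_natural_iso:
  assumes C: "is_category C" and F: "is_endofunctor C Fo Fm" and G: "is_endofunctor C Go Gm"
    and theta: "natural_iso C Fo Fm Go Gm theta" and K: "replete_subcategory C K"
  shows "sub_preimage C Fo Fm K = sub_preimage C Go Gm K"
proof -
  have obj: "Fo X \<in> fst K \<longleftrightarrow> Go X \<in> fst K" if "X \<in> c_obj C" for X
    using replete_iso_cod_iff[OF K] theta that unfolding natural_iso_def by metis
  have mor: "Fm f \<in> snd K \<longleftrightarrow> Gm f \<in> snd K" if f: "f \<in> c_mor C" for f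
  proof (rule replete_square_iff[OF C K])
    show "c_comp C (theta (c_cod C f)) (Fm f) = c_comp C (Gm f) (theta (c_dom C f))"
      using theta f unfolding natural_iso_def by blast
  qed (use theta f in \<open>auto simp: natural_iso_def endofunctorD[OF F] endofunctorD[OF G]
         cat_dom_obj[OF C] cat_cod_obj[OF C]\<close>)
  show ?thesis unfolding sub_preimage_def using obj mor by auto
qed

locale category_group_action =
  fixes G :: "('g, 'b) monoid_scheme" and C :: "('o, 'm, 'z) scat_scheme"
    and To :: "'g \<Rightarrow> 'o \<Rightarrow> 'o" and Tm :: "'g \<Rightarrow> 'm \<Rightarrow> 'm"
    and TJ :: "'g \<Rightarrow> 'o \<Rightarrow> 'o \<Rightarrow> 'm"
    and gam :: "'g \<Rightarrow> 'g \<Rightarrow> 'o \<Rightarrow> 'm" and u :: "'o \<Rightarrow> 'm"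
  assumes group: "group G"
    and category: "is_category C"
    and action: "group_action G C To Tm TJ gam u"

sublocale category_group_action \<subseteq> G: group G
  by (rule group)

context category_group_action
begin

lemma endofunctor_action: "g \<in> carrier G \<Longrightarrow> is_endofunctor C (To g) (Tm g)"
  using action
  unfolding group_action_def semigroupal_autoequivalence_def semigroupal_functor_def by simp

lemma sub_preimage_action_mult:
  assumes g: "g \<in> carrier G" and h: "h \<in> carrier G" and K: "replete_subcategory C K"
  shows "sub_preimage C (To h) (Tm h) (sub_preimage C (To g) (Tm g) K)
       = sub_preimage C (To (g \<otimes>\<^bsub>G\<^esub> h)) (Tm (g \<otimes>\<^bsub>G\<^esub> h)) K"
proof -
  have gamma: "natural_iso C (To g \<circ> To h) (Tm g \<circ> Tm h)
      (To (g \<otimes>\<^bsub>G\<^esub> h)) (Tm (g \<otimes>\<^bsub>G\<^esub> h)) (gam g h)"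
    using action g h semigroupal_nat_iso_natural_iso unfolding group_action_def by blast
  have "sub_preimage C (To h) (Tm h) (sub_preimage C (To g) (Tm g) K)
      = sub_preimage C (To g \<circ> To h) (Tm g \<circ> Tm h) K"
    by (rule sub_preimage_comp[OF endofunctor_action[OF h]])
  also have "\<dots> = sub_preimage C (To (g \<otimes>\<^bsub>G\<^esub> h)) (Tm (g \<otimes>\<^bsub>G\<^esub> h)) K"
    by (rule sub_preimage_natural_iso[OF category
          endofunctor_comp[OF endofunctor_action[OF h] endofunctor_action[OF g]]
          endofunctor_action[OF G.m_closed[OF g h]] gamma K])
  finally show ?thesis .
qed

lemma sub_preimage_action_one:
  assumes K: "replete_subcategory C K"
  shows "sub_preimage C (To \<one>\<^bsub>G\<^esub>) (Tm \<one>\<^bsub>G\<^esub>) K = K"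
proof -
  have "natural_iso C id id (To \<one>\<^bsub>G\<^esub>) (Tm \<one>\<^bsub>G\<^esub>) u"
    using action semigroupal_nat_iso_natural_iso unfolding group_action_def by blast
  then have "sub_preimage C id id K = sub_preimage C (To \<one>\<^bsub>G\<^esub>) (Tm \<one>\<^bsub>G\<^esub>) K"
    by (rule sub_preimage_natural_iso[OF category id_endofunctor
          endofunctor_action[OF G.one_closed] _ K])
  then show ?thesis using sub_preimage_id[OF K] by simp
qed

lemma sub_preimage_action_inv:
  assumes g: "g \<in> carrier G" and K: "replete_subcategory C K"
  shows "sub_preimage C (To (inv\<^bsub>G\<^esub> g)) (Tm (inv\<^bsub>G\<^esub> g)) (sub_preimage C (To g) (Tm g) K) = K"
  using sub_preimage_action_mult[OF g G.inv_closed[OF g] K] sub_preimage_action_one[OF K] g by simp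

lemma image_iso_closure_image_le:
  assumes g: "g \<in> carrier G" and h: "h \<in> carrier G" and K: "replete_subcategory C K"
    and D: "sub_le D (c_obj C, c_mor C)"
    and image: "sub_le (sub_image (To (g \<otimes>\<^bsub>G\<^esub> h)) (Tm (g \<otimes>\<^bsub>G\<^esub> h)) D) K"
  shows "sub_le (sub_image (To g) (Tm g) (iso_closure C (sub_image (To h) (Tm h) D))) K"
proof (rule iso_closure_image_le[OF category endofunctor_action[OF g] K])
  show hD: "sub_le (sub_image (To h) (Tm h) D) (c_obj C, c_mor C)"
    using sub_image_endofunctor_le[OF endofunctor_action[OF h] D] .
  have "sub_le D (sub_preimage C (To h) (Tm h) (sub_preimage C (To g) (Tm g) K))"
    using image sub_image_le_iff[OF D] sub_preimage_action_mult[OF g h K] by simp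
  then show "sub_le (sub_image (To g) (Tm g) (sub_image (To h) (Tm h) D)) K"
    using sub_image_le_iff[OF D] sub_image_le_iff[OF hD] by blast
qed

lemma replete_iso_closure_action_image:
  "g \<in> carrier G \<Longrightarrow> replete_subcategory C I \<Longrightarrow>
   replete_subcategory C (iso_closure C (sub_image (To g) (Tm g) I))"
  using replete_iso_closure[OF category] sub_image_endofunctor_le endofunctor_action
    replete_subcategory_le by blast

lemma replete_Csub:
  "g \<in> carrier G \<Longrightarrow> replete_subcategory C I \<Longrightarrow> replete_subcategory C (Csub C To Tm I g)"
  unfolding Csub_def using replete_sub_inter replete_iso_closure_action_image by blast

lemma Csub_one:
  assumes I: "replete_subcategory C I"
  shows "Csub C To Tm I \<one>\<^bsub>G\<^esub> = I"
proof -
  let ?L = "iso_closure C (sub_image (To \<one>\<^bsub>G\<^esub>) (Tm \<one>\<^bsub>G\<^esub>) I)"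
  have "sub_le I (sub_preimage C (To \<one>\<^bsub>G\<^esub>) (Tm \<one>\<^bsub>G\<^esub>) ?L)"
    using iso_closure_upper sub_image_le_iff[OF replete_subcategory_le[OF I]] by blast
  then have "sub_le I ?L"
    unfolding sub_preimage_action_one[OF replete_iso_closure_action_image[OF G.one_closed I]] .
  then show ?thesis unfolding Csub_def sub_inter_def sub_le_def by (auto simp: prod_eq_iff)
qed

lemma image_Csub_inter_le:
  assumes I: "replete_subcategory C I" and g: "g \<in> carrier G" and h: "h \<in> carrier G"
  shows "sub_le (sub_image (To g) (Tm g)
                  (sub_inter (Csub C To Tm I (inv\<^bsub>G\<^esub> g)) (Csub C To Tm I h)))
                (sub_inter (Csub C To Tm I g) (Csub C To Tm I (g \<otimes>\<^bsub>G\<^esub> h)))"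
proof -
  have I_le: "sub_le I (c_obj C, c_mor C)" by (rule replete_subcategory_le[OF I])
  have "sub_le I (sub_preimage C (To \<one>\<^bsub>G\<^esub>) (Tm \<one>\<^bsub>G\<^esub>) I)"
    unfolding sub_preimage_action_one[OF I] by (simp add: sub_le_def)
  then have "sub_le (sub_image (To (g \<otimes>\<^bsub>G\<^esub> inv\<^bsub>G\<^esub> g)) (Tm (g \<otimes>\<^bsub>G\<^esub> inv\<^bsub>G\<^esub> g)) I) I"
    using sub_image_le_iff[OF I_le] g by simp
  then have into_I: "sub_le (sub_image (To g) (Tm g)
      (iso_closure C (sub_image (To (inv\<^bsub>G\<^esub> g)) (Tm (inv\<^bsub>G\<^esub> g)) I))) I"
    by (rule image_iso_closure_image_le[OF g G.inv_closed[OF g] I I_le])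
  have into_gh: "sub_le (sub_image (To g) (Tm g) (iso_closure C (sub_image (To h) (Tm h) I)))
      (iso_closure C (sub_image (To (g \<otimes>\<^bsub>G\<^esub> h)) (Tm (g \<otimes>\<^bsub>G\<^esub> h)) I))"
    by (rule image_iso_closure_image_le[OF g h
          replete_iso_closure_action_image[OF G.m_closed[OF g h] I] I_le iso_closure_upper])
  have into_g: "sub_le (sub_image (To g) (Tm g) I) (iso_closure C (sub_image (To g) (Tm g) I))"
    by (rule iso_closure_upper)
  show ?thesis
    using into_I into_gh into_g unfolding Csub_def sub_le_def sub_image_def sub_inter_def by auto
qed

lemma iso_closure_image_Csub_inter:
  assumes I: "replete_subcategory C I" and g: "g \<in> carrier G" and h: "h \<in> carrier G"
  shows "iso_closure C (sub_image (To g) (Tm g)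
            (sub_inter (Csub C To Tm I (inv\<^bsub>G\<^esub> g)) (Csub C To Tm I h)))
       = sub_inter (Csub C To Tm I g) (Csub C To Tm I (g \<otimes>\<^bsub>G\<^esub> h))"
    (is "?L = ?R")
proof -
  let ?E = "sub_inter (Csub C To Tm I (inv\<^bsub>G\<^esub> g)) (Csub C To Tm I h)"
  have R: "replete_subcategory C ?R"
    by (intro replete_sub_inter replete_Csub I G.m_closed g h)
  have E: "replete_subcategory C ?E"
    by (intro replete_sub_inter replete_Csub I G.inv_closed g h)
  have L: "replete_subcategory C ?L"
    using replete_iso_closure[OF category] sub_image_endofunctor_le[OF endofunctor_action[OF g]]
      replete_subcategory_le[OF E] by blast
  have "sub_le ?L ?R"
    by (rule iso_closure_least[OF R image_Csub_inter_le[OF I g h]])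
  moreover have "sub_le ?R ?L"
  proof -
    have "h = inv\<^bsub>G\<^esub> g \<otimes>\<^bsub>G\<^esub> (g \<otimes>\<^bsub>G\<^esub> h)"
      using G.inv_solve_left[OF h g] g h by simp
    then have "sub_le (sub_image (To (inv\<^bsub>G\<^esub> g)) (Tm (inv\<^bsub>G\<^esub> g)) ?R) ?E"
      using image_Csub_inter_le[OF I G.inv_closed[OF g] G.m_closed[OF g h]] g by simp
    then have "sub_le ?R (sub_preimage C (To (inv\<^bsub>G\<^esub> g)) (Tm (inv\<^bsub>G\<^esub> g)) ?E)"
      using sub_image_le_iff[OF replete_subcategory_le[OF R]] by blast
    moreover have "sub_le ?E (sub_preimage C (To g) (Tm g) ?L)"
      using iso_closure_upper sub_image_le_iff[OF replete_subcategory_le[OF E]] by blast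
    ultimately have "sub_le ?R (sub_preimage C (To (inv\<^bsub>G\<^esub> g)) (Tm (inv\<^bsub>G\<^esub> g))
        (sub_preimage C (To g) (Tm g) ?L))"
      using sub_preimage_mono unfolding sub_le_def by blast
    then show ?thesis unfolding sub_preimage_action_inv[OF g L] .
  qed
  ultimately show ?thesis by (rule sub_le_antisym)
qed

end

theorem lemma3p1:
  fixes G :: "('g, 'b) monoid_scheme"
    and C :: "('o, 'm, 'z) scat_scheme"
    and To :: "'g \<Rightarrow> 'o \<Rightarrow> 'o" and Tm :: "'g \<Rightarrow> 'm \<Rightarrow> 'm"
    and TJ :: "'g \<Rightarrow> 'o \<Rightarrow> 'o \<Rightarrow> 'm"
    and gam :: "'g \<Rightarrow> 'g \<Rightarrow> 'o \<Rightarrow> 'm" and u :: "'o \<Rightarrow> 'm"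
    and I :: "('o, 'm) subcat"
  assumes "group G"
    and "semigroupal_category C"
    and "group_action G C To Tm TJ gam u"
    and "is_ideal C I"
  shows "Csub C To Tm I \<one>\<^bsub>G\<^esub> = I \<and>
    (\<forall>g \<in> carrier G. \<forall>h \<in> carrier G.
       sub_le (sub_image (To g) (Tm g)
                 (sub_inter (Csub C To Tm I (inv\<^bsub>G\<^esub> g)) (Csub C To Tm I h)))
              (sub_inter (Csub C To Tm I g) (Csub C To Tm I (g \<otimes>\<^bsub>G\<^esub> h)))) \<and>
    (\<forall>g \<in> carrier G. \<forall>h \<in> carrier G.
       iso_closure C (sub_image (To g) (Tm g)
                 (sub_inter (Csub C To Tm I (inv\<^bsub>G\<^esub> g)) (Csub C To Tm I h)))
         = sub_inter (Csub C To Tm I g) (Csub C To Tm I (g \<otimes>\<^bsub>G\<^esub> h)))"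
proof -
  interpret category_group_action G C To Tm TJ gam u
    using assms(1-3) by (simp add: category_group_action_def semigroupal_category_def)
  have I: "replete_subcategory C I"
    using assms(4) unfolding is_ideal_def replete_subcategory_def by simp
  show ?thesis
    using Csub_one[OF I] image_Csub_inter_le[OF I] iso_closure_image_Csub_inter[OF I] by blast
qed

end
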